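(* Let $\Lambda$ be a finite, strongly connected $k$-graph with exactly one vertex, $y$ an $\mathbb{R}_+$-functor on $\Lambda$, and $\theta\in(0,\infty)$ such that condition (w-I) holds: $\rho(B_i(y,\theta))>1$ for all $1\le i\le k$. Then the function $w_{y,\theta}:F\mathcal{B}_\Lambda\to(0,\infty)$, $w_{y,\theta}(\lambda)=e^{-y(\lambda)}\big(\rho(B(y,\theta))^{-d(\lambda)}\big)^{1/\theta}$, is a weight on $\mathcal{B}_\Lambda$.
   Context: A $k$-graph is a countable small category $\Lambda$ with a degree functor $d:\Lambda\to\mathbb{N}^k$ satisfying unique factorization: if $d(\lambda)=m+n$ there are unique $\eta,\nu$ with $\lambda=\eta\nu$, $d(\eta)=m$, $d(\nu)=n$. $\Lambda^n=d^{-1}(n)$, $\Lambda^0$ = vertices, $r,s$ range/source; $e_i$ standard basis; finite: each $\Lambda^n$ finite; strongly connected: $v\Lambda w\ne\emptyset$ for all vertices (for finite $\Lambda$ this entails $\Lambda^{e_i}\ne\emptyset$ for all $i$). An $\mathbb{R}_+$-functor is $y:\Lambda\to[0,\infty)$ with $y(v)=0$ on vertices and $y(\lambda\nu)=y(\lambda)+y(\nu)$ when $s(\lambda)=r(\nu)$. With one vertex, $B_i(y,\theta)$ is the $1\times1$ matrix $\sum_{h\in\Lambda^{e_i}}e^{-\theta y(h)}=\rho(B_i(y,\theta))$; $\rho(B(y,\theta))^m=\prod_i\rho(B_i(y,\theta))^{m_i}$. A Bratteli diagram $\mathcal{B}$ has finite vertex sets $\mathcal{V}_n$ ($n\ge0$)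 and finite edge sets $\mathcal{E}_n$ ($n\ge1$), edges in $\mathcal{E}_n$ going from $\mathcal{V}_n$ to $\mathcal{V}_{n-1}$. A finite path of length $n$ is $f_1\cdots f_n$ with $f_j\in\mathcal{E}_j$, $s(f_j)=r(f_{j+1})$ (length-0 paths: vertices of $\mathcal{V}_0$); $F^n\mathcal{B}$ the set of these, $F\mathcal{B}=\bigcup_nF^n\mathcal{B}$. A weight on $\mathcal{B}$ is $w:F\mathcal{B}\to[0,\infty)$ with (i) $w(v)\le1$ for $v\in\mathcal{V}_0$; (ii) $\lim_n\sup\{w(\gamma):\gamma\in F^n\mathcal{B}\}=0$; (iii) $w(\gamma)\le w(\eta)$ whenever $\eta$ is an initial segment of $\gamma$. Stationary $k$-Bratteli diagram $\mathcal{B}_\Lambda$: $\mathcal{V}_n=\Lambda^0$; for $n\ge1$, $n\equiv i\pmod k$, $i\in\{1,\dots,k\}$, $\mathcal{E}_n$ has one edge from $q\in\mathcal{V}_n$ to $p\in\mathcal{V}_{n-1}$ for each $\lambda\in p\Lambda^{e_i}q$. A finite path $f_1\cdots f_n$ is identified with the morphism $f_1\cdots f_n\in\Lambda$, on which $y$ and $d$ are evaluated. *)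

theory Defs
  imports Complex_Main "HOL-Library.Countable_Set"
begin

text \<open>Degrees in N^k are represented as functions nat => nat vanishing at
 all indices j >= k (coordinates are indexed 0..k-1).\<close>

definition degs :: "nat \<Rightarrow> (nat \<Rightarrow> nat) set" where
  "degs k = {m. \<forall>j\<ge>k. m j = 0}"

definition unitdeg :: "nat \<Rightarrow> nat \<Rightarrow> nat" where
  "unitdeg i = (\<lambda>j. if j = i then 1 else 0)"

text \<open>A k-graph: a countable small category whose morphisms form the set L
 (objects are identified with identity morphisms), with range r, source s,
 composition cmp (defined when s x = r z), and degree functor d satisfying
 unique factorisation.\<close>

definition is_kgraph ::
  "nat \<Rightarrow> 'm set \<Rightarrow> ('m \<Rightarrow> 'm) \<Rightarrow> ('m \<Rightarrow> 'm) \<Rightarrow> ('m \<Rightarrow> 'm \<Rightarrow> 'm) \<Rightarrow> ('m \<Rightarrow> nat \<Rightarrow> nat) \<Rightarrow> bool" where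
  "is_kgraph k L r s cmp d \<longleftrightarrow>
     countable L \<and>
     (\<forall>x\<in>L. r x \<in> L \<and> s x \<in> L \<and> d x \<in> degs k) \<and>
     (\<forall>x\<in>L. r (r x) = r x \<and> s (r x) = r x \<and> r (s x) = s x \<and> s (s x) = s x) \<and>
     (\<forall>x\<in>L. cmp (r x) x = x \<and> cmp x (s x) = x) \<and>
     (\<forall>x\<in>L. \<forall>z\<in>L. s x = r z \<longrightarrow>
        cmp x z \<in> L \<and> r (cmp x z) = r x \<and> s (cmp x z) = s z \<and>
        d (cmp x z) = (\<lambda>j. d x j + d z j)) \<and>
     (\<forall>x\<in>L. \<forall>u\<in>L. \<forall>z\<in>L. s x = r u \<and> s u = r z \<longrightarrow>
        cmp (cmp x u) z = cmp x (cmp u z)) \<and>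
     (\<forall>x\<in>L. \<forall>m\<in>degs k. \<forall>n\<in>degs k. d x = (\<lambda>j. m j + n j) \<longrightarrow>
        (\<exists>!p. fst p \<in> L \<and> snd p \<in> L \<and> s (fst p) = r (snd p) \<and>
              x = cmp (fst p) (snd p) \<and> d (fst p) = m \<and> d (snd p) = n))"

definition deg_set :: "'m set \<Rightarrow> ('m \<Rightarrow> nat \<Rightarrow> nat) \<Rightarrow> (nat \<Rightarrow> nat) \<Rightarrow> 'm set" where
  "deg_set L d n = {x\<in>L. d x = n}"

definition kverts :: "'m set \<Rightarrow> ('m \<Rightarrow> nat \<Rightarrow> nat) \<Rightarrow> 'm set" where
  "kverts L d = deg_set L d (\<lambda>_. 0)"

definition finite_kgraph :: "'m set \<Rightarrow> ('m \<Rightarrow> nat \<Rightarrow> nat) \<Rightarrow> bool" where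
  "finite_kgraph L d \<longleftrightarrow> (\<forall>n. finite (deg_set L d n))"

definition strongly_connected ::
  "'m set \<Rightarrow> ('m \<Rightarrow> 'm) \<Rightarrow> ('m \<Rightarrow> 'm) \<Rightarrow> ('m \<Rightarrow> nat \<Rightarrow> nat) \<Rightarrow> bool" where
  "strongly_connected L r s d \<longleftrightarrow>
     (\<forall>v\<in>kverts L d. \<forall>w\<in>kverts L d. \<exists>x\<in>L. r x = v \<and> s x = w)"

definition is_Rplus_functor ::
  "'m set \<Rightarrow> ('m \<Rightarrow> 'm) \<Rightarrow> ('m \<Rightarrow> 'm) \<Rightarrow> ('m \<Rightarrow> 'm \<Rightarrow> 'm) \<Rightarrow> ('m \<Rightarrow> nat \<Rightarrow> nat)
   \<Rightarrow> ('m \<Rightarrow> real) \<Rightarrow> bool" where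
  "is_Rplus_functor L r s cmp d y \<longleftrightarrow>
     (\<forall>x\<in>L. y x \<ge> 0) \<and> (\<forall>v\<in>kverts L d. y v = 0) \<and>
     (\<forall>x\<in>L. \<forall>z\<in>L. s x = r z \<longrightarrow> y (cmp x z) = y x + y z)"

text \<open>One-vertex case: rho(B_i(y,theta)) = sum over h in Lambda^{e_i} of exp(-theta y(h))
 (index i from 0 to k-1), and rho(B(y,theta))^m = prod_i rho(B_i(y,theta))^{m_i}.\<close>
definition rhoB :: "'m set \<Rightarrow> ('m \<Rightarrow> nat \<Rightarrow> nat) \<Rightarrow> ('m \<Rightarrow> real) \<Rightarrow> real \<Rightarrow> nat \<Rightarrow> real" where
  "rhoB L d y \<theta> i = (\<Sum>h\<in>deg_set L d (unitdeg i). exp (- \<theta> * y h))"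

definition rhoB_pow ::
  "nat \<Rightarrow> 'm set \<Rightarrow> ('m \<Rightarrow> nat \<Rightarrow> nat) \<Rightarrow> ('m \<Rightarrow> real) \<Rightarrow> real \<Rightarrow> (nat \<Rightarrow> nat) \<Rightarrow> real" where
  "rhoB_pow k L d y \<theta> m = (\<Prod>i<k. rhoB L d y \<theta> i ^ m i)"

definition is_bratteli ::
  "(nat \<Rightarrow> 'v set) \<Rightarrow> (nat \<Rightarrow> 'e set) \<Rightarrow> ('e \<Rightarrow> 'v) \<Rightarrow> ('e \<Rightarrow> 'v) \<Rightarrow> bool" where
  "is_bratteli V E rng src \<longleftrightarrow>
     (\<forall>n. finite (V n)) \<and> (\<forall>n\<ge>1. finite (E n)) \<and>
     (\<forall>n\<ge>1. \<forall>e\<in>E n. src e \<in> V n \<and> rng e \<in> V (n - 1))"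

text \<open>Finite paths of length n: pairs (v, [f_1,...,f_n]) with f_j in E j,
 s(f_j) = r(f_{j+1}); v is the vertex of V 0 where the path starts
 (v = r(f_1) if n > 0; for n = 0 the path is just the vertex v).\<close>
definition fpaths ::
  "(nat \<Rightarrow> 'v set) \<Rightarrow> (nat \<Rightarrow> 'e set) \<Rightarrow> ('e \<Rightarrow> 'v) \<Rightarrow> ('e \<Rightarrow> 'v) \<Rightarrow> nat \<Rightarrow> ('v \<times> 'e list) set" where
  "fpaths V E rng src n = {(v, fs). length fs = n \<and> v \<in> V 0 \<and>
      (\<forall>j<n. fs ! j \<in> E (Suc j)) \<and> (0 < n \<longrightarrow> rng (fs ! 0) = v) \<and>
      (\<forall>j. Suc j < n \<longrightarrow> src (fs ! j) = rng (fs ! Suc j))}"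

definition is_weight ::
  "(nat \<Rightarrow> 'v set) \<Rightarrow> (nat \<Rightarrow> 'e set) \<Rightarrow> ('e \<Rightarrow> 'v) \<Rightarrow> ('e \<Rightarrow> 'v) \<Rightarrow> ('v \<times> 'e list \<Rightarrow> real) \<Rightarrow> bool" where
  "is_weight V E rng src w \<longleftrightarrow>
     is_bratteli V E rng src \<and>
     (\<forall>n. \<forall>\<gamma>\<in>fpaths V E rng src n. 0 \<le> w \<gamma>) \<and>
     (\<forall>v\<in>V 0. w (v, []) \<le> 1) \<and>
     (\<lambda>n. Sup (w ` fpaths V E rng src n)) \<longlonglongrightarrow> 0 \<and>
     (\<forall>n. \<forall>\<gamma>\<in>fpaths V E rng src n. \<forall>m\<le>n. w \<gamma> \<le> w (fst \<gamma>, take m (snd \<gamma>)))"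

definition BL_V :: "'m set \<Rightarrow> ('m \<Rightarrow> nat \<Rightarrow> nat) \<Rightarrow> nat \<Rightarrow> 'm set" where
  "BL_V L d n = kverts L d"

text \<open>Level n >= 1, n = i (mod k) with i in {1..k}: edges are the morphisms of
 degree e_i; in 0-based coordinates that is unitdeg ((n-1) mod k).\<close>
definition BL_E :: "nat \<Rightarrow> 'm set \<Rightarrow> ('m \<Rightarrow> nat \<Rightarrow> nat) \<Rightarrow> nat \<Rightarrow> 'm set" where
  "BL_E k L d n = (if n = 0 then {} else deg_set L d (unitdeg ((n - 1) mod k)))"

definition path_mor :: "('m \<Rightarrow> 'm \<Rightarrow> 'm) \<Rightarrow> 'm \<times> 'm list \<Rightarrow> 'm" where
  "path_mor cmp \<gamma> = foldl cmp (fst \<gamma>) (snd \<gamma>)"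

definition w_yth ::
  "nat \<Rightarrow> 'm set \<Rightarrow> ('m \<Rightarrow> nat \<Rightarrow> nat) \<Rightarrow> ('m \<Rightarrow> real) \<Rightarrow> real \<Rightarrow> 'm \<Rightarrow> real" where
  "w_yth k L d y \<theta> x = exp (- y x) * (inverse (rhoB_pow k L d y \<theta> (d x))) powr (1 / \<theta>)"

end

theory Submission
  imports Defs
begin

text \<open>The function w is multiplicative on composable pairs, since y is additive and
  m \<mapsto> rho(B)^m is multiplicative. With a single vertex every pair of morphisms is
  composable, so the weight of a path is the product of the weights of its edges. An edge of
  degree e_i has weight at most rho(B_i)^(-1/theta), which by (w-I) is at most some c < 1.
  Hence a path of length n has weight at most c^n, and weights decrease along initial
  segments because every edge has weight at most 1.\<close>

lemma kgraph_closed: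
  assumes "is_kgraph k L r s cmp d" and "x \<in> L"
  shows "r x \<in> L" and "s x \<in> L"
  using assms unfolding is_kgraph_def by auto

lemma kgraph_range_source_idem:
  assumes "is_kgraph k L r s cmp d" and "x \<in> L"
  shows "r (r x) = r x" "s (r x) = r x" "r (s x) = s x" "s (s x) = s x"
  using assms unfolding is_kgraph_def by auto

lemma kgraph_cmp_identity:
  assumes "is_kgraph k L r s cmp d" and "x \<in> L"
  shows "cmp (r x) x = x" and "cmp x (s x) = x"
  using assms unfolding is_kgraph_def by auto

lemma kgraph_cmp:
  assumes "is_kgraph k L r s cmp d" and "x \<in> L" and "z \<in> L" and "s x = r z"
  shows "cmp x z \<in> L" and "d (cmp x z) = (\<lambda>j. d x j + d z j)"
  using assms unfolding is_kgraph_def by auto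

lemma kgraph_identity_degree:
  assumes kg: "is_kgraph k L r s cmp d" and "u \<in> L" and "s u = u"
  shows "d u = (\<lambda>_. 0)"
proof -
  have "s u = r u" using kgraph_range_source_idem(3)[OF kg \<open>u \<in> L\<close>] \<open>s u = u\<close> by simp
  moreover have "cmp u u = u" using kgraph_cmp_identity(2)[OF kg \<open>u \<in> L\<close>] \<open>s u = u\<close> by simp
  ultimately have "d u = (\<lambda>j. d u j + d u j)"
    using kgraph_cmp(2)[OF kg \<open>u \<in> L\<close> \<open>u \<in> L\<close>] by simp
  then show ?thesis by (metis add_cancel_right_right)
qed

lemma kgraph_range_source_kverts:
  assumes kg: "is_kgraph k L r s cmp d" and "x \<in> L"
  shows "r x \<in> kverts L d" and "s x \<in> kverts L d"
  using kgraph_identity_degree[OF kg, of "r x"] kgraph_identity_degree[OF kg, of "s x"]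
    kgraph_closed[OF assms] kgraph_range_source_idem[OF assms]
  by (auto simp: kverts_def deg_set_def)

lemma kgraph_single_vertex:
  assumes "is_kgraph k L r s cmp d" and "kverts L d = {v}" and "x \<in> L"
  shows "r x = v" and "s x = v"
  using kgraph_range_source_kverts[OF assms(1,3)] assms(2) by auto

lemma rhoB_pow_zero: "rhoB_pow k L d y \<theta> (\<lambda>_. 0) = 1"
  unfolding rhoB_pow_def by simp

lemma rhoB_pow_add:
  "rhoB_pow k L d y \<theta> (\<lambda>j. m j + n j) = rhoB_pow k L d y \<theta> m * rhoB_pow k L d y \<theta> n"
  unfolding rhoB_pow_def by (simp add: power_add prod.distrib)

lemma rhoB_pow_unitdeg:
  assumes "i < k"
  shows "rhoB_pow k L d y \<theta> (unitdeg i) = rhoB L d y \<theta> i"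
proof -
  have "rhoB_pow k L d y \<theta> (unitdeg i) = (\<Prod>j<k. if j = i then rhoB L d y \<theta> j else 1)"
    unfolding rhoB_pow_def by (rule prod.cong) (auto simp: unitdeg_def)
  then show ?thesis using assms by (simp add: prod.delta)
qed

lemma w_yth_nonneg: "0 \<le> w_yth k L d y \<theta> x"
  unfolding w_yth_def by simp

lemma w_yth_vertex:
  assumes "is_Rplus_functor L r s cmp d y" and "v \<in> kverts L d"
  shows "w_yth k L d y \<theta> v = 1"
  using assms by (simp add: w_yth_def is_Rplus_functor_def kverts_def deg_set_def rhoB_pow_zero)

lemma w_yth_cmp:
  assumes kg: "is_kgraph k L r s cmp d" and y: "is_Rplus_functor L r s cmp d y"
    and "x \<in> L" and "z \<in> L" and "s x = r z"
  shows "w_yth k L d y \<theta> (cmp x z) = w_yth k L d y \<theta> x * w_yth k L d y \<theta> z"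
proof -
  have "y (cmp x z) = y x + y z" using y assms(3-5) by (simp add: is_Rplus_functor_def)
  moreover have "d (cmp x z) = (\<lambda>j. d x j + d z j)" using kgraph_cmp(2)[OF kg assms(3-5)] .
  ultimately show ?thesis
    by (simp add: w_yth_def rhoB_pow_add powr_mult exp_add[symmetric])
qed

lemma w_yth_unitdeg_le:
  assumes "is_Rplus_functor L r s cmp d y" and "f \<in> L" and "d f = unitdeg i" and "i < k"
  shows "w_yth k L d y \<theta> f \<le> inverse (rhoB L d y \<theta> i) powr (1 / \<theta>)"
proof -
  have "exp (- y f) \<le> 1" using assms(1,2) by (simp add: is_Rplus_functor_def)
  then show ?thesis
    using assms(3,4) by (simp add: w_yth_def rhoB_pow_unitdeg mult_left_le_one_le)
qed

lemma inverse_powr_less_one: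
  fixes \<rho> \<theta> :: real
  assumes "1 < \<rho>" and "0 < \<theta>"
  shows "inverse \<rho> powr (1 / \<theta>) < 1"
proof -
  have "inverse \<rho> powr (1 / \<theta>) < 1 powr (1 / \<theta>)"
    using assms by (intro powr_less_mono2) (auto simp: inverse_less_1_iff)
  then show ?thesis by simp
qed

lemma w_I_contraction:
  assumes "0 < \<theta>" and "\<forall>i<k. rhoB L d y \<theta> i > 1"
  obtains c :: real where "0 \<le> c" and "c < 1"
    and "\<And>i. i < k \<Longrightarrow> inverse (rhoB L d y \<theta> i) powr (1 / \<theta>) \<le> c"
proof
  define C where "C = insert 0 ((\<lambda>i. inverse (rhoB L d y \<theta> i) powr (1 / \<theta>)) ` {..<k})"
  have "finite C" by (simp add: C_def)
  show "0 \<le> Max C" using \<open>finite C\<close> by (simp add: C_def)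
  show "Max C < 1" using \<open>finite C\<close> assms by (auto simp: C_def inverse_powr_less_one)
  show "inverse (rhoB L d y \<theta> i) powr (1 / \<theta>) \<le> Max C" if "i < k" for i
    using \<open>finite C\<close> that by (auto simp: C_def)
qed

lemma prod_list_le_power:
  fixes xs :: "real list"
  assumes "\<And>x. x \<in> set xs \<Longrightarrow> 0 \<le> x \<and> x \<le> c"
  shows "prod_list xs \<le> c ^ length xs"
  using assms
proof (induction xs)
  case (Cons x xs)
  then have "0 \<le> x" "x \<le> c" "0 \<le> prod_list xs" "prod_list xs \<le> c ^ length xs"
    by (auto intro: prod_list_nonneg)
  then show ?case by (simp add: mult_mono)
qed simp

lemma prod_list_le_prod_list_take:
  fixes xs :: "real list"
  assumes "\<And>x. x \<in> set xs \<Longrightarrow> 0 \<le> x \<and> x \<le> 1"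
  shows "prod_list xs \<le> prod_list (take m xs)"
proof -
  have "prod_list (drop m xs) \<le> 1"
    using prod_list_le_power[of "drop m xs" 1] assms by (auto dest: in_set_dropD)
  moreover have "0 \<le> prod_list (take m xs)"
    using assms by (auto intro: prod_list_nonneg dest: in_set_takeD)
  ultimately have "prod_list (take m xs) * prod_list (drop m xs) \<le> prod_list (take m xs)"
    by (simp add: mult_left_le)
  then show ?thesis by (metis append_take_drop_id prod_list.append)
qed

lemma path_mor_snoc: "path_mor cmp (v, fs @ [f]) = cmp (path_mor cmp (v, fs)) f"
  by (simp add: path_mor_def)

lemma w_yth_path_mor_single_vertex:
  assumes kg: "is_kgraph k L r s cmp d" and y: "is_Rplus_functor L r s cmp d y"
    and V: "kverts L d = {v}" and "set fs \<subseteq> L"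
  shows "path_mor cmp (v, fs) \<in> L \<and>
    w_yth k L d y \<theta> (path_mor cmp (v, fs)) = prod_list (map (w_yth k L d y \<theta>) fs)"
  using \<open>set fs \<subseteq> L\<close>
proof (induction fs rule: rev_induct)
  case Nil
  have "v \<in> kverts L d" using V by simp
  then show ?case
    using w_yth_vertex[OF y] by (auto simp: path_mor_def kverts_def deg_set_def)
next
  case (snoc f fs)
  have f: "f \<in> L" and "set fs \<subseteq> L" using snoc.prems by auto
  then have IH: "path_mor cmp (v, fs) \<in> L"
      "w_yth k L d y \<theta> (path_mor cmp (v, fs)) = prod_list (map (w_yth k L d y \<theta>) fs)"
    using snoc.IH by auto
  have "s (path_mor cmp (v, fs)) = r f"
    using kgraph_single_vertex[OF kg V] IH(1) f by simp
  then show ?case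
    using kgraph_cmp(1)[OF kg IH(1) f] w_yth_cmp[OF kg y IH(1) f] IH(2)
    by (simp_all add: path_mor_snoc)
qed

lemma w_yth_path_mor_le_power:
  assumes "is_kgraph k L r s cmp d" and "is_Rplus_functor L r s cmp d y"
    and "kverts L d = {v}" and "set fs \<subseteq> L"
    and "\<And>f. f \<in> set fs \<Longrightarrow> w_yth k L d y \<theta> f \<le> c"
  shows "w_yth k L d y \<theta> (path_mor cmp (v, fs)) \<le> c ^ length fs"
proof -
  have "prod_list (map (w_yth k L d y \<theta>) fs) \<le> c ^ length (map (w_yth k L d y \<theta>) fs)"
    using assms(5) w_yth_nonneg by (intro prod_list_le_power) auto
  then show ?thesis using w_yth_path_mor_single_vertex[OF assms(1-4)] by simp
qed

lemma w_yth_path_mor_take_ge: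
  assumes kg: "is_kgraph k L r s cmp d" and y: "is_Rplus_functor L r s cmp d y"
    and V: "kverts L d = {v}" and "set fs \<subseteq> L"
    and "\<And>f. f \<in> set fs \<Longrightarrow> w_yth k L d y \<theta> f \<le> 1"
  shows "w_yth k L d y \<theta> (path_mor cmp (v, fs)) \<le> w_yth k L d y \<theta> (path_mor cmp (v, take m fs))"
proof -
  have "set (take m fs) \<subseteq> L" using assms(4) set_take_subset by (rule order.trans[rotated])
  moreover have "prod_list (map (w_yth k L d y \<theta>) fs) \<le> prod_list (take m (map (w_yth k L d y \<theta>) fs))"
    using assms(5) w_yth_nonneg by (intro prod_list_le_prod_list_take) auto
  ultimately show ?thesis
    using w_yth_path_mor_single_vertex[OF kg y V] assms(4) by (simp add: take_map)
qed

lemma fpaths_BL_single_vertex: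
  assumes "is_kgraph k L r s cmp d" and "kverts L d = {v}"
  shows "fpaths (BL_V L d) (BL_E k L d) r s n =
    Pair v ` {fs. length fs = n \<and> (\<forall>j<n. fs ! j \<in> deg_set L d (unitdeg (j mod k)))}"
  using kgraph_single_vertex[OF assms]
  by (auto simp: fpaths_def BL_V_def BL_E_def assms(2) deg_set_def)

lemma deg_set_nonempty_if_rhoB_pos:
  assumes "0 < rhoB L d y \<theta> i"
  shows "deg_set L d (unitdeg i) \<noteq> {}"
  using assms by (auto simp: rhoB_def)

lemma finite_lists_nth_in:
  assumes "\<And>j. j < n \<Longrightarrow> finite (A j)"
  shows "finite {xs. length xs = n \<and> (\<forall>j<n. xs ! j \<in> A j)}"
proof (rule finite_subset)
  show "{xs. length xs = n \<and> (\<forall>j<n. xs ! j \<in> A j)} \<subseteq> {xs. set xs \<subseteq> (\<Union>j<n. A j) \<and> length xs = n}"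
    by (fastforce simp: set_conv_nth)
  show "finite {xs. set xs \<subseteq> (\<Union>j<n. A j) \<and> length xs = n}"
    using assms by (intro finite_lists_length_eq) auto
qed

lemma lists_nth_in_nonempty:
  assumes "\<And>j. j < n \<Longrightarrow> A j \<noteq> {}"
  shows "{xs. length xs = n \<and> (\<forall>j<n. xs ! j \<in> A j)} \<noteq> {}"
proof -
  have "map (\<lambda>j. SOME x. x \<in> A j) [0..<n] \<in> {xs. length xs = n \<and> (\<forall>j<n. xs ! j \<in> A j)}"
    using assms by (auto intro: some_in_eq[THEN iffD2])
  then show ?thesis by blast
qed

lemma finite_fpaths_BL_single_vertex:
  assumes "is_kgraph k L r s cmp d" and "finite_kgraph L d" and "kverts L d = {v}"
  shows "finite (fpaths (BL_V L d) (BL_E k L d) r s n)"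
  using assms(2) unfolding fpaths_BL_single_vertex[OF assms(1,3)] finite_kgraph_def
  by (intro finite_imageI finite_lists_nth_in) simp

lemma fpaths_BL_single_vertex_nonempty:
  assumes "is_kgraph k L r s cmp d" and "kverts L d = {v}" and "0 < k"
    and "\<And>i. i < k \<Longrightarrow> deg_set L d (unitdeg i) \<noteq> {}"
  shows "fpaths (BL_V L d) (BL_E k L d) r s n \<noteq> {}"
  using assms(3,4) unfolding fpaths_BL_single_vertex[OF assms(1,2)] image_is_empty
  by (intro lists_nth_in_nonempty) simp

lemma fpaths_BL_single_vertexE:
  assumes kg: "is_kgraph k L r s cmp d" and y: "is_Rplus_functor L r s cmp d y"
    and V: "kverts L d = {v}" and "0 < k"
    and "\<gamma> \<in> fpaths (BL_V L d) (BL_E k L d) r s n"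
    and c: "\<And>i. i < k \<Longrightarrow> inverse (rhoB L d y \<theta> i) powr (1 / \<theta>) \<le> c"
  obtains fs where "\<gamma> = (v, fs)" and "length fs = n" and "set fs \<subseteq> L"
    and "\<And>f. f \<in> set fs \<Longrightarrow> w_yth k L d y \<theta> f \<le> c"
proof -
  obtain fs where fs: "\<gamma> = (v, fs)" "length fs = n"
    and edges: "\<And>j. j < n \<Longrightarrow> fs ! j \<in> deg_set L d (unitdeg (j mod k))"
    using assms(5) unfolding fpaths_BL_single_vertex[OF kg V] by blast
  have "f \<in> L \<and> w_yth k L d y \<theta> f \<le> c" if "f \<in> set fs" for f
  proof -
    obtain j where "j < n" and "f = fs ! j" using \<open>f \<in> set fs\<close> fs(2) by (auto simp: in_set_conv_nth)
    then have "f \<in> L" and "d f = unitdeg (j mod k)" using edges by (auto simp: deg_set_def)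
    then show ?thesis
      using w_yth_unitdeg_le[OF y, where i="j mod k" and k=k and \<theta>=\<theta>] c[of "j mod k"] \<open>0 < k\<close>
      by fastforce
  qed
  then show ?thesis using that fs by blast
qed

lemma w_yth_fpaths_BL_bounds:
  assumes kg: "is_kgraph k L r s cmp d" and y: "is_Rplus_functor L r s cmp d y"
    and V: "kverts L d = {v}" and "0 < k"
    and \<gamma>: "\<gamma> \<in> fpaths (BL_V L d) (BL_E k L d) r s n"
    and c: "\<And>i. i < k \<Longrightarrow> inverse (rhoB L d y \<theta> i) powr (1 / \<theta>) \<le> c" and "c \<le> 1"
  shows "w_yth k L d y \<theta> (path_mor cmp \<gamma>) \<le> c ^ n"
    and "w_yth k L d y \<theta> (path_mor cmp \<gamma>) \<le> w_yth k L d y \<theta> (path_mor cmp (fst \<gamma>, take m (snd \<gamma>)))"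
proof -
  obtain fs where "\<gamma> = (v, fs)" "length fs = n" and fs_L: "set fs \<subseteq> L"
    and fs_c: "\<And>f. f \<in> set fs \<Longrightarrow> w_yth k L d y \<theta> f \<le> c"
    using fpaths_BL_single_vertexE[OF kg y V \<open>0 < k\<close> \<gamma> c] by blast
  moreover have fs_1: "w_yth k L d y \<theta> f \<le> 1" if "f \<in> set fs" for f
    using fs_c[OF that] \<open>c \<le> 1\<close> by simp
  ultimately show "w_yth k L d y \<theta> (path_mor cmp \<gamma>) \<le> c ^ n"
    and "w_yth k L d y \<theta> (path_mor cmp \<gamma>) \<le> w_yth k L d y \<theta> (path_mor cmp (fst \<gamma>, take m (snd \<gamma>)))"
    using w_yth_path_mor_le_power[OF kg y V fs_L fs_c]
      w_yth_path_mor_take_ge[OF kg y V fs_L fs_1, where m=m]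
    by simp_all
qed

lemma is_bratteli_BL:
  assumes kg: "is_kgraph k L r s cmp d" and "finite_kgraph L d"
  shows "is_bratteli (BL_V L d) (BL_E k L d) r s"
  using assms(2) kgraph_range_source_kverts[OF kg]
  by (auto simp: is_bratteli_def BL_V_def BL_E_def finite_kgraph_def kverts_def deg_set_def)

lemma Sup_image_tendsto_zero_geometric:
  fixes S :: "nat \<Rightarrow> 'a set" and f :: "'a \<Rightarrow> real" and c :: real
  assumes "\<And>n. finite (S n)" and "\<And>n. S n \<noteq> {}" and "0 \<le> c" and "c < 1"
    and "\<And>n x. x \<in> S n \<Longrightarrow> 0 \<le> f x \<and> f x \<le> c ^ n"
  shows "(\<lambda>n. Sup (f ` S n)) \<longlonglongrightarrow> 0"
proof (rule tendsto_sandwich[OF _ _ tendsto_const LIMSEQ_power_zero[of c]])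
  have "0 \<le> Sup (f ` S n) \<and> Sup (f ` S n) \<le> c ^ n" for n
    using assms(1,2) assms(5)[of _ n] by (auto simp: cSup_eq_Max Max_ge_iff ex_in_conv)
  then show "\<forall>\<^sub>F n in sequentially. 0 \<le> Sup (f ` S n)"
    and "\<forall>\<^sub>F n in sequentially. Sup (f ` S n) \<le> c ^ n"
    by auto
  show "norm c < 1" using assms(3,4) by simp
qed

theorem proposition6p7:
  fixes k :: nat and L :: "'m set" and r s :: "'m \<Rightarrow> 'm"
    and cmp :: "'m \<Rightarrow> 'm \<Rightarrow> 'm" and d :: "'m \<Rightarrow> nat \<Rightarrow> nat"
    and y :: "'m \<Rightarrow> real" and \<theta> :: real
  assumes "0 < k"
    and "is_kgraph k L r s cmp d"
    and "finite_kgraph L d"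
    and "strongly_connected L r s d"
    and "card (kverts L d) = 1"
    and "is_Rplus_functor L r s cmp d y"
    and "0 < \<theta>"
    and "\<forall>i<k. rhoB L d y \<theta> i > 1"
  shows "is_weight (BL_V L d) (BL_E k L d) r s (\<lambda>\<gamma>. w_yth k L d y \<theta> (path_mor cmp \<gamma>))"
proof -
  note kg = assms(2) and yf = assms(6)
  obtain v where V: "kverts L d = {v}" using assms(5) card_1_singletonE by blast
  obtain c where c: "0 \<le> c" "c < 1"
    and c_bound: "\<And>i. i < k \<Longrightarrow> inverse (rhoB L d y \<theta> i) powr (1 / \<theta>) \<le> c"
    using w_I_contraction[OF assms(7,8)] by blast
  note path_bounds = w_yth_fpaths_BL_bounds[OF kg yf V assms(1) _ c_bound less_imp_le[OF c(2)]]
  \<comment> \<open>(w-I) already forces every Lambda^{e_i} to be nonempty.\<close>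
  have edges_nonempty: "deg_set L d (unitdeg i) \<noteq> {}" if "i < k" for i
    using assms(8) that by (intro deg_set_nonempty_if_rhoB_pos[where y=y and \<theta>=\<theta>]) auto
  show ?thesis
    unfolding is_weight_def
  proof (intro conjI allI ballI impI)
    show "is_bratteli (BL_V L d) (BL_E k L d) r s" using is_bratteli_BL[OF kg assms(3)] .
    show "0 \<le> w_yth k L d y \<theta> (path_mor cmp \<gamma>)" for \<gamma> by (rule w_yth_nonneg)
    show "w_yth k L d y \<theta> (path_mor cmp (u, [])) \<le> 1" if "u \<in> BL_V L d 0" for u
      using that w_yth_vertex[OF yf] by (simp add: BL_V_def path_mor_def)
    show "(\<lambda>n. Sup ((\<lambda>\<gamma>. w_yth k L d y \<theta> (path_mor cmp \<gamma>)) ` fpaths (BL_V L d) (BL_E k L d) r s n))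
        \<longlonglongrightarrow> 0"
    proof (rule Sup_image_tendsto_zero_geometric[OF finite_fpaths_BL_single_vertex[OF kg assms(3) V]
          fpaths_BL_single_vertex_nonempty[OF kg V assms(1) edges_nonempty] c])
      fix n \<gamma> assume "\<gamma> \<in> fpaths (BL_V L d) (BL_E k L d) r s n"
      then show "0 \<le> w_yth k L d y \<theta> (path_mor cmp \<gamma>) \<and> w_yth k L d y \<theta> (path_mor cmp \<gamma>) \<le> c ^ n"
        by (intro conjI w_yth_nonneg path_bounds(1))
    qed
    show "w_yth k L d y \<theta> (path_mor cmp \<gamma>) \<le> w_yth k L d y \<theta> (path_mor cmp (fst \<gamma>, take m (snd \<gamma>)))"
      if "\<gamma> \<in> fpaths (BL_V L d) (BL_E k L d) r s n" for n \<gamma> m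
      using path_bounds(2)[OF that] .
  qed
qed

end
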